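(* Let $n>0$ and let $\{p_j:j\le n\}$ be pairwise Rudin–Keisler incomparable selective ultrafilters on $\omega$. For each $j\le n$ let $\{a^j_k:k\in\omega\}\in p_j$ be a strictly increasing sequence with $a^j_k>k$ for every $k\in\omega$. Then there is a family $\{I_j:j\le n\}$ of subsets of $\omega$ such that (i) $\{a^j_k:k\in I_j\}\in p_j$ for each $j\le n$; and (ii) the intervals $[k,a^j_k]$ for $j\le n$, $k\in I_j$ are pairwise disjoint intervals of $\omega$.
   Context: A selective ultrafilter is a free ultrafilter $p$ on $\omega$ such that for every partition $\{A_n:n\in\omega\}$ of $\omega$ either some $A_n\in p$ or there is $B\in p$ with $|B\cap A_n|=1$ for every $n$. For $p,q$ free ultrafilters, $p\le_{RK}q$ if there is $f:\omega\to\omega$ with $p=\{A\subseteq\omega: f^{-1}(A)\in q\}$; $p,q$ are incomparable if neither $p\le_{RK}q$ nor $q\le_{RK}p$. $[k,a]$ denotes $\{i\in\omega:k\le i\le a\}$. *)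

theory Defs
  imports Main
begin

definition ultrafilter_on_nat :: "nat set set \<Rightarrow> bool" where
  "ultrafilter_on_nat U \<longleftrightarrow>
     UNIV \<in> U \<and> {} \<notin> U \<and>
     (\<forall>A B. A \<in> U \<and> A \<subseteq> B \<longrightarrow> B \<in> U) \<and>
     (\<forall>A B. A \<in> U \<and> B \<in> U \<longrightarrow> A \<inter> B \<in> U) \<and>
     (\<forall>A. A \<in> U \<or> - A \<in> U)"

definition free_ultrafilter_on_nat :: "nat set set \<Rightarrow> bool" where
  "free_ultrafilter_on_nat U \<longleftrightarrow> ultrafilter_on_nat U \<and> (\<forall>A\<in>U. infinite A)"

definition selective :: "nat set set \<Rightarrow> bool" where
  "selective U \<longleftrightarrow> free_ultrafilter_on_nat U \<and>
     (\<forall>A :: nat \<Rightarrow> nat set.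
        (\<forall>n. A n \<noteq> {}) \<and> (\<forall>m n. m \<noteq> n \<longrightarrow> A m \<inter> A n = {}) \<and> (\<Union>n. A n) = UNIV
        \<longrightarrow> (\<exists>n. A n \<in> U) \<or> (\<exists>B\<in>U. \<forall>n. card (B \<inter> A n) = 1))"

definition rk_le :: "nat set set \<Rightarrow> nat set set \<Rightarrow> bool" where
  "rk_le p q \<longleftrightarrow> (\<exists>f :: nat \<Rightarrow> nat. p = {A. f -` A \<in> q})"

definition rk_incomparable :: "nat set set \<Rightarrow> nat set set \<Rightarrow> bool" where
  "rk_incomparable p q \<longleftrightarrow> \<not> rk_le p q \<and> \<not> rk_le q p"

end

theory Submission
  imports Defs
begin

text \<open>Cut \<open>\<omega>\<close> into finite blocks \<open>[m i, m (i+1))\<close> so fast-growing that \<open>a\<^sub>j\<close> maps each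
  block into the next one; then every interval \<open>[k, a\<^sub>j k]\<close> meets at most two consecutive
  blocks. Selectivity gives, for each \<open>j\<close>, a set in \<open>p\<^sub>j\<close> meeting each block at most once,
  and Rudin--Keisler incomparability lets us shrink these sets so that the block indices
  used by different ultrafilters are disjoint and never adjacent; a parity class separates
  the indices used by a single ultrafilter. Intervals whose right ends lie in blocks at
  distance at least two are disjoint.\<close>

lemma ultrafilter_on_nat_mono:
  "ultrafilter_on_nat U \<Longrightarrow> A \<in> U \<Longrightarrow> A \<subseteq> B \<Longrightarrow> B \<in> U"
  unfolding ultrafilter_on_nat_def by blast

lemma ultrafilter_on_nat_Int:
  "ultrafilter_on_nat U \<Longrightarrow> A \<in> U \<Longrightarrow> B \<in> U \<Longrightarrow> A \<inter> B \<in> U"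
  unfolding ultrafilter_on_nat_def by blast

lemma ultrafilter_on_nat_Compl:
  "ultrafilter_on_nat U \<Longrightarrow> A \<notin> U \<Longrightarrow> - A \<in> U"
  unfolding ultrafilter_on_nat_def by blast

lemma ultrafilter_on_nat_INT:
  assumes "ultrafilter_on_nat U" and "finite J" and "\<forall>i\<in>J. Z i \<in> U"
  shows "(\<Inter>i\<in>J. Z i) \<in> U"
  using assms(2,3)
proof (induction J rule: finite_induct)
  case empty
  then show ?case using assms(1) unfolding ultrafilter_on_nat_def by simp
next
  case (insert i J)
  then show ?case using ultrafilter_on_nat_Int[OF assms(1)] by simp
qed

lemma ultrafilter_on_nat_cong:
  "ultrafilter_on_nat U \<Longrightarrow> C \<in> U \<Longrightarrow> X \<inter> C = Y \<inter> C \<Longrightarrow> X \<in> U \<Longrightarrow> Y \<in> U"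
  by (metis inf_le1 ultrafilter_on_nat_Int ultrafilter_on_nat_mono)

lemma ultrafilter_on_nat_parity_class:
  assumes "ultrafilter_on_nat U"
  shows "\<exists>P\<in>U. \<forall>x\<in>P. \<forall>y\<in>P. even (f x) = even (f y)"
proof (cases "{x. even (f x)} \<in> U")
  case False
  then have "- {x. even (f x)} \<in> U" by (rule ultrafilter_on_nat_Compl[OF assms])
  then show ?thesis by (intro bexI[of _ "- {x. even (f x)}"]) auto
qed (intro bexI[of _ "{x. even (f x)}"], auto)

lemma selective_imp_ultrafilter: "selective U \<Longrightarrow> ultrafilter_on_nat U"
  unfolding selective_def free_ultrafilter_on_nat_def by simp

lemma selective_inj_on_finite_fibres:
  fixes f :: "nat \<Rightarrow> nat"
  assumes sel: "selective U" and "surj f" and fin: "\<And>i. finite (f -` {i})"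
  shows "\<exists>C\<in>U. inj_on f C"
proof -
  let ?A = "\<lambda>i. f -` {i}"
  have "(\<exists>i. ?A i \<in> U) \<or> (\<exists>C\<in>U. \<forall>i. card (C \<inter> ?A i) = 1)"
  proof -
    have "\<forall>i. ?A i \<noteq> {}" using \<open>surj f\<close> by (metis empty_iff surjD vimage_singleton_eq)
    moreover have "\<forall>i i'. i \<noteq> i' \<longrightarrow> ?A i \<inter> ?A i' = {}" by blast
    moreover have "(\<Union>i. ?A i) = UNIV" by blast
    moreover note sel[unfolded selective_def, THEN conjunct2, rule_format, of ?A]
    ultimately show ?thesis by blast
  qed
  moreover have "?A i \<notin> U" for i
    using sel fin unfolding selective_def free_ultrafilter_on_nat_def by blast
  ultimately obtain C where "C \<in> U" and C: "\<And>i. card (C \<inter> ?A i) = 1" by blast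
  have "inj_on f C"
  proof (rule inj_onI)
    fix x y assume "x \<in> C" "y \<in> C" "f x = f y"
    then have "x \<in> C \<inter> ?A (f x)" "y \<in> C \<inter> ?A (f x)" by auto
    then show "x = y" using C by (metis card_1_singletonE singletonD)
  qed
  then show ?thesis using \<open>C \<in> U\<close> by blast
qed

text \<open>If \<open>f\<close> is injective on a member of \<open>p\<close>, then \<open>p\<close> is the image of \<open>f(p)\<close> under a
  left inverse of \<open>f\<close>; so \<open>f(p) = g(q)\<close> would make \<open>p \<le>\<^sub>R\<^sub>K q\<close>.\<close>

lemma rk_le_if_images_eq:
  assumes u: "ultrafilter_on_nat p" and C: "C \<in> p" and inj: "inj_on f C"
    and eq: "\<And>D. f -` D \<in> p \<longleftrightarrow> g -` D \<in> q"
  shows "rk_le p q"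
proof -
  let ?h = "inv_into C f \<circ> g"
  have "A \<in> p \<longleftrightarrow> ?h -` A \<in> q" for A
  proof -
    let ?E = "f -` (inv_into C f -` A)"
    have "?E \<inter> C = A \<inter> C" using inj by (auto simp: inv_into_f_f)
    then have "A \<in> p \<longleftrightarrow> ?E \<in> p" using ultrafilter_on_nat_cong[OF u C] by metis
    also have "\<dots> \<longleftrightarrow> g -` (inv_into C f -` A) \<in> q" by (rule eq)
    also have "g -` (inv_into C f -` A) = ?h -` A" by auto
    finally show ?thesis .
  qed
  then show ?thesis unfolding rk_le_def by blast
qed

lemma not_rk_le_separating_sets:
  assumes up: "ultrafilter_on_nat p" and uq: "ultrafilter_on_nat q"
    and "C \<in> p" and "inj_on f C" and "\<not> rk_le p q"
  shows "\<exists>X\<in>p. \<exists>Y\<in>q. f ` X \<inter> g ` Y = {}"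
proof (rule ccontr)
  assume meet: "\<not> ?thesis"
  have "f -` D \<in> p \<longleftrightarrow> g -` D \<in> q" for D
  proof
    assume "f -` D \<in> p"
    show "g -` D \<in> q"
    proof (rule ccontr)
      assume "g -` D \<notin> q"
      then have "- (g -` D) \<in> q" by (rule ultrafilter_on_nat_Compl[OF uq])
      moreover have "f ` (f -` D) \<inter> g ` (- (g -` D)) = {}" by auto
      ultimately show False using meet \<open>f -` D \<in> p\<close> by blast
    qed
  next
    assume "g -` D \<in> q"
    show "f -` D \<in> p"
    proof (rule ccontr)
      assume "f -` D \<notin> p"
      then have "- (f -` D) \<in> p" by (rule ultrafilter_on_nat_Compl[OF up])
      moreover have "f ` (- (f -` D)) \<inter> g ` (g -` D) = {}" by auto
      ultimately show False using meet \<open>g -` D \<in> q\<close> by blast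
    qed
  qed
  then show False using rk_le_if_images_eq[OF up assms(3,4)] assms(5) by blast
qed

lemma rk_incomparable_far_sets:
  assumes up: "ultrafilter_on_nat p" and uq: "ultrafilter_on_nat q"
    and inc: "rk_incomparable p q"
    and "C \<in> p" "inj_on f C" and "D \<in> q" "inj_on f D"
  shows "\<exists>X\<in>p. \<exists>Y\<in>q. \<forall>x\<in>X. \<forall>y\<in>Y. Suc (f x) < f y \<or> Suc (f y) < f x"
proof -
  have pq: "\<not> rk_le p q" and qp: "\<not> rk_le q p" using inc unfolding rk_incomparable_def by auto
  obtain X1 Y1 where "X1 \<in> p" "Y1 \<in> q" and 1: "f ` X1 \<inter> f ` Y1 = {}"
    using not_rk_le_separating_sets[OF up uq assms(4,5) pq] by blast
  obtain X2 Y2 where "X2 \<in> p" "Y2 \<in> q" and 2: "f ` X2 \<inter> (Suc \<circ> f) ` Y2 = {}"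
    using not_rk_le_separating_sets[OF up uq assms(4,5) pq] by blast
  obtain Y3 X3 where "Y3 \<in> q" "X3 \<in> p" and 3: "f ` Y3 \<inter> (Suc \<circ> f) ` X3 = {}"
    using not_rk_le_separating_sets[OF uq up assms(6,7) qp] by blast
  have "X1 \<inter> X2 \<inter> X3 \<in> p" "Y1 \<inter> Y2 \<inter> Y3 \<in> q"
    using \<open>X1 \<in> p\<close> \<open>X2 \<in> p\<close> \<open>X3 \<in> p\<close> \<open>Y1 \<in> q\<close> \<open>Y2 \<in> q\<close> \<open>Y3 \<in> q\<close>
    by (simp_all add: up uq ultrafilter_on_nat_Int)
  moreover have "Suc (f x) < f y \<or> Suc (f y) < f x"
    if "x \<in> X1 \<inter> X2 \<inter> X3" "y \<in> Y1 \<inter> Y2 \<inter> Y3" for x y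
  proof -
    have "f x \<noteq> f y" "f x \<noteq> Suc (f y)" "f y \<noteq> Suc (f x)"
      using 1 2 3 that by (auto simp: disjoint_iff)
    then show ?thesis by linarith
  qed
  ultimately show ?thesis by blast
qed

lemma selective_family_far_sets:
  fixes n :: nat and p :: "nat \<Rightarrow> nat set set" and f :: "nat \<Rightarrow> nat"
  assumes sel: "\<forall>j\<le>n. selective (p j)"
    and inc: "\<forall>i\<le>n. \<forall>j\<le>n. i \<noteq> j \<longrightarrow> rk_incomparable (p i) (p j)"
    and "surj f" and "\<And>i. finite (f -` {i})"
  shows "\<exists>B. (\<forall>j\<le>n. B j \<in> p j) \<and>
    (\<forall>j\<le>n. \<forall>j'\<le>n. \<forall>x\<in>B j. \<forall>y\<in>B j'. (j, x) \<noteq> (j', y) \<longrightarrow> Suc (f x) < f y \<or> Suc (f y) < f x)"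
proof -
  have uf: "\<And>j. j \<le> n \<Longrightarrow> ultrafilter_on_nat (p j)"
    using sel selective_imp_ultrafilter by blast
  have "\<forall>j. \<exists>C. j \<le> n \<longrightarrow> C \<in> p j \<and> inj_on f C"
    using selective_inj_on_finite_fibres[OF _ assms(3,4)] sel by blast
  then obtain C where C: "\<And>j. j \<le> n \<Longrightarrow> C j \<in> p j \<and> inj_on f (C j)"
    by metis
  have "\<forall>j. \<exists>P. j \<le> n \<longrightarrow> P \<in> p j \<and> (\<forall>x\<in>P. \<forall>y\<in>P. even (f x) = even (f y))"
    using ultrafilter_on_nat_parity_class uf by blast
  then obtain P where P: "\<And>j. j \<le> n \<Longrightarrow> P j \<in> p j \<and> (\<forall>x\<in>P j. \<forall>y\<in>P j. even (f x) = even (f y))"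
    by metis
  have "\<exists>X Y. i \<le> n \<and> j \<le> n \<and> i \<noteq> j \<longrightarrow> X \<in> p i \<and> Y \<in> p j \<and>
      (\<forall>x\<in>X. \<forall>y\<in>Y. Suc (f x) < f y \<or> Suc (f y) < f x)" for i j
  proof (cases "i \<le> n \<and> j \<le> n \<and> i \<noteq> j")
    case True
    then have "rk_incomparable (p i) (p j)" using inc by blast
    with True show ?thesis
      using rk_incomparable_far_sets[OF uf uf _ conjunct1[OF C] conjunct2[OF C] conjunct1[OF C] conjunct2[OF C]]
      by blast
  qed blast
  then obtain X Y where XY: "\<And>i j. i \<le> n \<Longrightarrow> j \<le> n \<Longrightarrow> i \<noteq> j \<Longrightarrow> X i j \<in> p i \<and> Y i j \<in> p j \<and>
      (\<forall>x\<in>X i j. \<forall>y\<in>Y i j. Suc (f x) < f y \<or> Suc (f y) < f x)"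
    by metis
  define B where "B j = C j \<inter> P j \<inter> (\<Inter>i\<in>{..n} - {j}. X j i \<inter> Y i j)" for j
  have "B j \<in> p j" if "j \<le> n" for j
  proof -
    have "(\<Inter>i\<in>{..n} - {j}. X j i \<inter> Y i j) \<in> p j"
      using XY that by (intro ultrafilter_on_nat_INT uf ballI ultrafilter_on_nat_Int) auto
    then show ?thesis using C[OF that] P[OF that] by (simp add: B_def ultrafilter_on_nat_Int uf that)
  qed
  moreover have "Suc (f x) < f y \<or> Suc (f y) < f x"
    if "j \<le> n" "j' \<le> n" "x \<in> B j" "y \<in> B j'" "(j, x) \<noteq> (j', y)" for j j' x y
  proof (cases "j = j'")
    case True
    then have "f x \<noteq> f y" using C[OF \<open>j \<le> n\<close>] that unfolding B_def inj_on_def by auto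
    moreover have "even (f x) = even (f y)" using P[OF \<open>j \<le> n\<close>] that True unfolding B_def by auto
    ultimately show ?thesis by presburger
  next
    case False
    then show ?thesis using XY[OF that(1,2) False] that unfolding B_def by blast
  qed
  ultimately show ?thesis by blast
qed

locale block_sequence =
  fixes m :: "nat \<Rightarrow> nat"
  assumes strict_mono: "strict_mono m" and zero: "m 0 = 0"
begin

definition block :: "nat \<Rightarrow> nat" where
  "block x = (LEAST i. x < m (Suc i))"

lemma less_block_Suc: "x < m (Suc (block x))"
proof -
  have "x < m (Suc x)" using strict_mono_imp_increasing[OF strict_mono, of "Suc x"] by simp
  then show ?thesis unfolding block_def by (rule LeastI)
qed

lemma block_le: "m (block x) \<le> x"
proof (cases "block x")
  case (Suc i)
  then have "\<not> x < m (Suc i)" using not_less_Least[of i "\<lambda>i. x < m (Suc i)"]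
    unfolding block_def by simp
  then show ?thesis using Suc by simp
qed (simp add: zero)

lemma block_eqI: "m i \<le> x \<Longrightarrow> x < m (Suc i) \<Longrightarrow> block x = i"
  using less_block_Suc[of x] block_le[of x] strict_mono
  by (metis Suc_leI antisym le_trans not_less strict_mono_less_eq)

lemma mono_block: "mono block"
proof (rule monoI, rule ccontr)
  fix x y :: nat assume "x \<le> y" "\<not> block x \<le> block y"
  then have "m (Suc (block y)) \<le> m (block x)" using strict_mono by (simp add: strict_mono_less_eq)
  then show False using less_block_Suc[of y] block_le[of x] \<open>x \<le> y\<close> by simp
qed

lemma surj_block: "surj block"
  using block_eqI strict_mono by (metis lessI order_refl strict_mono_less surjI)

lemma finite_block_fibre: "finite (block -` {i})"
  by (rule finite_subset[of _ "{..< m (Suc i)}"]) (use less_block_Suc in auto)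

lemma block_le_Suc_block:
  assumes "mono g" and dom: "\<And>i. g (m i) < m (Suc i)"
  shows "block (g k) \<le> Suc (block k)"
proof (rule ccontr)
  let ?i = "Suc (block k)"
  assume "\<not> ?thesis"
  then have "m (Suc ?i) \<le> m (block (g k))" using strict_mono by (simp add: strict_mono_less_eq)
  also have "\<dots> \<le> g k" by (rule block_le)
  also have "\<dots> \<le> g (m ?i)" using \<open>mono g\<close> less_block_Suc[of k] by (simp add: monoD)
  also have "\<dots> < m (Suc ?i)" by (rule dom)
  finally show False by simp
qed

end

lemma block_sequence_dominating:
  fixes g :: "'j \<Rightarrow> nat \<Rightarrow> nat"
  assumes "finite J"
  shows "\<exists>m. block_sequence m \<and> (\<forall>j\<in>J. \<forall>i. g j (m i) < m (Suc i))"
proof -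
  define S where "S z = z + (\<Sum>j\<in>J. g j z) + 1" for z
  define m where "m i = (S ^^ i) 0" for i
  have "strict_mono m" unfolding strict_mono_Suc_iff by (simp add: m_def S_def)
  moreover have "m 0 = 0" by (simp add: m_def)
  moreover have "g j (m i) < m (Suc i)" if "j \<in> J" for j i
    using member_le_sum[OF that _ assms, of "\<lambda>j. g j (m i)"] by (simp add: m_def S_def)
  ultimately show ?thesis unfolding block_sequence_def by blast
qed

lemma intervals_disjoint_if_ends_far:
  fixes f :: "nat \<Rightarrow> nat"
  assumes "mono f" and "f A \<le> Suc (f k)" and "f A' \<le> Suc (f k')"
    and "Suc (f A) < f A' \<or> Suc (f A') < f A"
  shows "{k..A} \<inter> {k'..A'} = {}"
proof (rule ccontr)
  assume "{k..A} \<inter> {k'..A'} \<noteq> {}"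
  then obtain z where "z \<in> {k..A}" "z \<in> {k'..A'}" by blast
  then have "f k \<le> f z" "f z \<le> f A" "f k' \<le> f z" "f z \<le> f A'"
    using \<open>mono f\<close> by (simp_all add: monoD)
  then show False using assms(2-4) by linarith
qed

theorem mainTheorem4:
  fixes n :: nat and p :: "nat \<Rightarrow> nat set set" and a :: "nat \<Rightarrow> nat \<Rightarrow> nat"
  assumes "n > 0"
    and "\<forall>j\<le>n. selective (p j)"
    and "\<forall>i\<le>n. \<forall>j\<le>n. i \<noteq> j \<longrightarrow> rk_incomparable (p i) (p j)"
    and "\<forall>j\<le>n. range (a j) \<in> p j"
    and "\<forall>j\<le>n. strict_mono (a j)"
    and "\<forall>j\<le>n. \<forall>k. a j k > k"
  shows "\<exists>I :: nat \<Rightarrow> nat set.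
           (\<forall>j\<le>n. a j ` I j \<in> p j) \<and>
           (\<forall>j\<le>n. \<forall>j'\<le>n. \<forall>k\<in>I j. \<forall>k'\<in>I j'. (j, k) \<noteq> (j', k') \<longrightarrow>
               {k..a j k} \<inter> {k'..a j' k'} = {})"
proof -
  obtain m where "block_sequence m" and dom: "\<forall>j\<le>n. \<forall>i. a j (m i) < m (Suc i)"
    using block_sequence_dominating[of "{..n}" a] by auto
  interpret block_sequence m by fact
  have short: "block (a j k) \<le> Suc (block k)" if "j \<le> n" for j k
    using block_le_Suc_block strict_mono_mono assms(5) dom that by blast
  obtain B where B: "\<forall>j\<le>n. B j \<in> p j" and far: "\<forall>j\<le>n. \<forall>j'\<le>n. \<forall>x\<in>B j. \<forall>y\<in>B j'.
      (j, x) \<noteq> (j', y) \<longrightarrow> Suc (block x) < block y \<or> Suc (block y) < block x"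
    using selective_family_far_sets[OF assms(2,3) surj_block finite_block_fibre] by blast
  define I where "I j = a j -` B j" for j
  have "a j ` I j \<in> p j" if "j \<le> n" for j
    using B assms(2,4) that ultrafilter_on_nat_Int selective_imp_ultrafilter
    by (metis I_def image_vimage_eq inf_commute)
  moreover have "{k..a j k} \<inter> {k'..a j' k'} = {}"
    if "j \<le> n" "j' \<le> n" "k \<in> I j" "k' \<in> I j'" "(j, k) \<noteq> (j', k')" for j j' k k'
  proof -
    have "(j, a j k) \<noteq> (j', a j' k')" using that assms(5) strict_mono_eq by fastforce
    then show ?thesis using far that short mono_block I_def
      by (intro intervals_disjoint_if_ends_far[of block]) auto
  qed
  ultimately show ?thesis by blast
qed

end
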